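(* Let $(X,r)$ be a finite simple solution of the YBE such that $|X|$ is not a prime number. Then $(X,r)$ is irretractable.
   Context: A solution of the Yang–Baxter equation (YBE) is a pair $(X,r)$ where $X$ is a nonempty set and $r:X\times X\to X\times X$ is a map, written $r(x,y)=(\sigma_x(y),\gamma_y(x))$, such that $r^2=\mathrm{id}$, all maps $\sigma_x,\gamma_x:X\to X$ are bijective, and $r_{12}r_{23}r_{12}=r_{23}r_{12}r_{23}$ on $X^3$, where $r_{12}=r\times\mathrm{id}_X$, $r_{23}=\mathrm{id}_X\times r$. $(X,r)$ is irretractable if $\sigma_x\neq\sigma_y$ for all distinct $x,y\in X$. If $(Y,s)$ is another solution with $s(t,z)=(\sigma'_t(z),\gamma'_z(t))$, a homomorphism of solutions $f:(X,r)\to(Y,s)$ is a map $f:X\to Y$ with $f(\sigma_x(y))=\sigma'_{f(x)}(f(y))$ for all $x,y$; epimorphism = surjective homomorphism, isomorphism = bijective homomorphism. $(X,r)$ is simple if $|X|>1$ and every epimorphism of solutions $f:(X,r)\to(Y,s)$ is either an isomorphism or satisfies $|Y|=1$. *)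

theory Defs
  imports "HOL-Computational_Algebra.Primes"
begin

definition ybe_sigma :: "('a \<times> 'a \<Rightarrow> 'a \<times> 'a) \<Rightarrow> 'a \<Rightarrow> 'a \<Rightarrow> 'a" where
  "ybe_sigma r x y = fst (r (x, y))"

definition ybe_gamma :: "('a \<times> 'a \<Rightarrow> 'a \<times> 'a) \<Rightarrow> 'a \<Rightarrow> 'a \<Rightarrow> 'a" where
  "ybe_gamma r y x = snd (r (x, y))"

definition ybe_solution :: "'a set \<Rightarrow> ('a \<times> 'a \<Rightarrow> 'a \<times> 'a) \<Rightarrow> bool" where
  "ybe_solution X r \<longleftrightarrow>
     X \<noteq> {} \<and>
     (\<forall>x\<in>X. \<forall>y\<in>X. r (x, y) \<in> X \<times> X) \<and>
     (\<forall>x\<in>X. \<forall>y\<in>X. r (r (x, y)) = (x, y)) \<and>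
     (\<forall>x\<in>X. bij_betw (ybe_sigma r x) X X) \<and>
     (\<forall>x\<in>X. bij_betw (ybe_gamma r x) X X) \<and>
     (\<forall>x\<in>X. \<forall>y\<in>X. \<forall>z\<in>X.
        (let r12 = (\<lambda>(a, b, c). (let (p, q) = r (a, b) in (p, q, c)));
             r23 = (\<lambda>(a, b, c). (let (p, q) = r (b, c) in (a, p, q)))
         in r12 (r23 (r12 (x, y, z))) = r23 (r12 (r23 (x, y, z)))))"

definition irretractable :: "'a set \<Rightarrow> ('a \<times> 'a \<Rightarrow> 'a \<times> 'a) \<Rightarrow> bool" where
  "irretractable X r \<longleftrightarrow>
     (\<forall>x\<in>X. \<forall>y\<in>X. x \<noteq> y \<longrightarrow> (\<exists>z\<in>X. ybe_sigma r x z \<noteq> ybe_sigma r y z))"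

definition ybe_hom ::
  "'a set \<Rightarrow> ('a \<times> 'a \<Rightarrow> 'a \<times> 'a) \<Rightarrow> 'b set \<Rightarrow> ('b \<times> 'b \<Rightarrow> 'b \<times> 'b) \<Rightarrow> ('a \<Rightarrow> 'b) \<Rightarrow> bool" where
  "ybe_hom X r Y s f \<longleftrightarrow>
     (\<forall>x\<in>X. f x \<in> Y) \<and>
     (\<forall>x\<in>X. \<forall>y\<in>X. f (ybe_sigma r x y) = ybe_sigma s (f x) (f y))"

text \<open>Simplicity. Target solutions range over solutions on subsets of the same
  type as X.\<close>

definition ybe_simple :: "'a set \<Rightarrow> ('a \<times> 'a \<Rightarrow> 'a \<times> 'a) \<Rightarrow> bool" where
  "ybe_simple X r \<longleftrightarrow>
     (\<exists>x\<in>X. \<exists>y\<in>X. x \<noteq> y) \<and>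
     (\<forall>(Y :: 'a set) s f. ybe_solution Y s \<longrightarrow> ybe_hom X r Y s f \<longrightarrow> f ` X = Y \<longrightarrow>
        inj_on f X \<or> (\<exists>y. Y = {y}))"

end

theory Submission
  imports Defs "HOL-Library.FuncSet"
begin

(*
  A congruence of a finite solution, i.e. an equivalence relation compatible with \<sigma> and \<gamma>,
  yields a quotient solution and an epimorphism onto it; so a simple solution has only the
  trivial congruences. Using involutivity, the braid relation and finiteness, the relation
  \<sigma>\<^sub>x = \<sigma>\<^sub>y is a congruence. Hence either the solution is irretractable or all \<sigma>\<^sub>x are one
  permutation h, and then every h-invariant equivalence relation is a congruence. If h is not
  transitive, an orbit of h and its complement give such a relation; if h is an n-cycle and
  a is a proper divisor of n, the orbits of h^a do. Either choice is neither the equality nor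
  the total relation, which contradicts simplicity unless |X| is prime.
*)

section \<open>Invariant equivalence relations of a permutation\<close>

lemma bij_betw_funpow_periodic:
  assumes g: "bij_betw g X X" and "finite X"
  obtains m where "0 < m" and "\<And>x. x \<in> X \<Longrightarrow> (g ^^ m) x = x"
proof -
  define F where "F k = restrict (g ^^ k) X" for k :: nat
  have "range F \<subseteq> X \<rightarrow>\<^sub>E X"
    using bij_betw_funpow[OF g] by (auto simp: F_def bij_betw_def image_subset_iff)
  moreover have "finite (X \<rightarrow>\<^sub>E X)" using \<open>finite X\<close> by (simp add: finite_PiE)
  ultimately have "\<not> inj F"
    using finite_subset finite_imageD infinite_UNIV_nat by blast
  then obtain i j where ij: "i < j" "F i = F j"
    unfolding inj_def by (metis nat_neq_iff)
  have "(g ^^ (j - i)) x = x" if x: "x \<in> X" for x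
  proof -
    have "(g ^^ i) ((g ^^ (j - i)) x) = (g ^^ (i + (j - i))) x"
      by (simp add: funpow_add)
    also have "\<dots> = (g ^^ j) x" using ij(1) by simp
    also have "\<dots> = (g ^^ i) x" using ij(2) x unfolding F_def by (metis restrict_apply')
    finally have "(g ^^ i) ((g ^^ (j - i)) x) = (g ^^ i) x" .
    moreover have "inj_on (g ^^ i) X" "(g ^^ (j - i)) x \<in> X"
      using bij_betw_funpow[OF g] x by (auto simp: bij_betw_def)
    ultimately show ?thesis using x by (simp add: inj_on_eq_iff)
  qed
  with ij(1) show ?thesis by (intro that[of "j - i"]) auto
qed

lemma map_prod_inverse_invariant:
  assumes g: "bij_betw g X X" and "finite X" and R: "R \<subseteq> X \<times> X"
    and f: "\<And>x. x \<in> X \<Longrightarrow> f x \<in> X \<and> g (f x) = x"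
    and inv: "map_prod g g ` R \<subseteq> R"
  shows "map_prod f f ` R \<subseteq> R"
proof -
  obtain m where m: "0 < m" "\<And>x. x \<in> X \<Longrightarrow> (g ^^ m) x = x"
    using bij_betw_funpow_periodic[OF g \<open>finite X\<close>] by blast
  have f_funpow: "f x = (g ^^ (m - 1)) x" if "x \<in> X" for x
  proof -
    have "(g ^^ (m - 1)) x = (g ^^ (m - 1)) (g (f x))" using f that by simp
    also have "\<dots> = (g ^^ m) (f x)"
      using m(1) by (cases m) (simp_all del: funpow.simps add: funpow_Suc_right)
    finally show ?thesis using m(2) f that by simp
  qed
  have "map_prod (g ^^ k) (g ^^ k) ` R \<subseteq> R" for k
  proof (induction k)
    case (Suc k)
    have "map_prod (g ^^ Suc k) (g ^^ Suc k) ` R = map_prod g g ` map_prod (g ^^ k) (g ^^ k) ` R"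
      by (simp only: funpow.simps(2) map_prod.comp[symmetric] image_comp)
    also have "\<dots> \<subseteq> map_prod g g ` R" using Suc.IH by (rule image_mono)
    finally show ?case using inv by (rule order_trans)
  qed simp
  moreover have "map_prod f f ` R = map_prod (g ^^ (m - 1)) (g ^^ (m - 1)) ` R"
    using R f_funpow by (intro image_cong) auto
  ultimately show ?thesis by simp
qed

definition funpow_orbit_rel :: "'a set \<Rightarrow> ('a \<Rightarrow> 'a) \<Rightarrow> ('a \<times> 'a) set" where
  "funpow_orbit_rel X g = {(x, (g ^^ k) x) | x k. x \<in> X}"

lemma funpow_orbit_rel_equiv:
  assumes g: "bij_betw g X X" and "finite X"
  shows "equiv X (funpow_orbit_rel X g)"
proof -
  obtain m where m: "0 < m" "\<And>x. x \<in> X \<Longrightarrow> (g ^^ m) x = x"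
    using bij_betw_funpow_periodic[OF g \<open>finite X\<close>] by blast
  have in_X: "(g ^^ k) x \<in> X" if "x \<in> X" for k x
    using bij_betw_funpow[OF g] that by (meson bij_betwE)
  have period_mult: "(g ^^ (m * k)) x = x" if "x \<in> X" for k x
  proof (induction k)
    case (Suc k)
    have "(g ^^ (m * Suc k)) x = (g ^^ m) ((g ^^ (m * k)) x)"
      by (simp add: funpow_add)
    with Suc m(2) that show ?case by simp
  qed simp
  have undo: "(g ^^ (k * (m - 1))) ((g ^^ k) x) = x" if "x \<in> X" for k x
  proof -
    have "k * (m - 1) + k = m * k" using m(1) by (cases m) simp_all
    then show ?thesis using period_mult[OF that, of k] by (metis comp_apply funpow_add)
  qed
  show ?thesis
  proof (rule equivI)
    show "funpow_orbit_rel X g \<subseteq> X \<times> X"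
      using in_X by (auto simp: funpow_orbit_rel_def)
    show "refl_on X (funpow_orbit_rel X g)"
      by (rule refl_onI) (auto simp: funpow_orbit_rel_def intro: exI[of _ 0])
    show "sym (funpow_orbit_rel X g)"
      by (rule symI) (auto simp: funpow_orbit_rel_def intro: in_X undo[symmetric])
    show "trans (funpow_orbit_rel X g)"
      by (rule transI) (auto simp: funpow_orbit_rel_def funpow_add[symmetric, THEN fun_cong, simplified comp_def])
  qed
qed

lemma invariant_subset_nontrivial_equiv:
  assumes "finite X" "2 < card X" "C \<subseteq> X" "c \<in> C" "q \<in> X" "q \<notin> C"
    and h_X: "h ` X \<subseteq> X" and h_C: "\<And>x. x \<in> X \<Longrightarrow> h x \<in> C \<longleftrightarrow> x \<in> C"
  shows "\<exists>R. equiv X R \<and> map_prod h h ` R \<subseteq> R \<and> R \<noteq> Id_on X \<and> R \<noteq> X \<times> X"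
proof (intro exI conjI)
  let ?R = "C \<times> C \<union> (X - C) \<times> (X - C)"
  show "equiv X ?R"
    using \<open>C \<subseteq> X\<close> by (auto simp: equiv_def refl_on_def sym_def trans_def)
  show "map_prod h h ` ?R \<subseteq> ?R"
    using \<open>C \<subseteq> X\<close> h_X h_C by auto
  show "?R \<noteq> X \<times> X"
    using assms(3-6) by auto
  show "?R \<noteq> Id_on X"
  proof
    assume "?R = Id_on X"
    then have "card C \<le> 1" "card (X - C) \<le> 1"
      using \<open>finite X\<close> \<open>C \<subseteq> X\<close>
      by (auto simp: card_le_Suc0_iff_eq finite_subset dest!: equalityD1)
    moreover have "card X = card C + card (X - C)"
      using \<open>finite X\<close> \<open>C \<subseteq> X\<close> by (metis card_Diff_subset finite_subset card_mono le_add_diff_inverse)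
    ultimately show False using \<open>2 < card X\<close> by simp
  qed
qed

lemma cyclic_nontrivial_invariant_equiv:
  assumes "finite X" "bij_betw h X X"
    and X: "X = (\<lambda>i. (h ^^ i) x0) ` {..<n}" and inj: "inj_on (\<lambda>i. (h ^^ i) x0) {..<n}"
    and period: "(h ^^ n) x0 = x0" and a: "a dvd n" "1 < a" "a < n"
  shows "\<exists>R. equiv X R \<and> map_prod h h ` R \<subseteq> R \<and> R \<noteq> Id_on X \<and> R \<noteq> X \<times> X"
proof (intro exI conjI)
  let ?R = "funpow_orbit_rel X (h ^^ a)"
  have R_iff: "(x, y) \<in> ?R \<longleftrightarrow> x \<in> X \<and> (\<exists>k. y = (h ^^ (a * k)) x)" for x y
    by (auto simp: funpow_orbit_rel_def funpow_mult)
  have x0: "x0 \<in> X" unfolding X using a by (auto intro!: image_eqI[of _ _ 0])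
  show "equiv X ?R"
    using funpow_orbit_rel_equiv bij_betw_funpow \<open>finite X\<close> \<open>bij_betw h X X\<close> by blast
  show "map_prod h h ` ?R \<subseteq> ?R"
    using \<open>bij_betw h X X\<close> by (fastforce simp: R_iff funpow_swap1 bij_betwE)
  show "?R \<noteq> Id_on X"
  proof
    assume "?R = Id_on X"
    moreover have "(x0, (h ^^ (a * 1)) x0) \<in> ?R" using x0 R_iff by blast
    ultimately have "(h ^^ a) x0 = (h ^^ 0) x0" by auto
    then show False using inj_onD[OF inj] a by fastforce
  qed
  show "?R \<noteq> X \<times> X"
  proof
    assume "?R = X \<times> X"
    moreover have "h x0 \<in> X" using x0 \<open>bij_betw h X X\<close> bij_betwE by blast
    ultimately obtain k where "h x0 = (h ^^ (a * k)) x0" using x0 R_iff by blast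
    also have "\<dots> = (h ^^ (a * k mod n)) x0" using funpow_mod_eq[OF period] by simp
    finally have "(h ^^ 1) x0 = (h ^^ (a * k mod n)) x0" by simp
    then have "a * k mod n = 1" using inj_onD[OF inj] a by fastforce
    moreover have "a dvd a * k mod n" using a(1) by (simp add: dvd_mod)
    ultimately show False using a(2) by simp
  qed
qed

lemma permutation_nontrivial_invariant_equiv:
  assumes fin: "finite X" and h: "bij_betw h X X"
    and two: "2 \<le> card X" and not_prime: "\<not> prime (card X)"
  shows "\<exists>R. equiv X R \<and> map_prod h h ` R \<subseteq> R \<and> R \<noteq> Id_on X \<and> R \<noteq> X \<times> X"
proof -
  obtain x0 where x0: "x0 \<in> X" using two by fastforce
  obtain m where m: "0 < m" "\<And>x. x \<in> X \<Longrightarrow> (h ^^ m) x = x"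
    using bij_betw_funpow_periodic[OF h fin] by blast
  define d where "d = (LEAST k. 0 < k \<and> (h ^^ k) x0 = x0)"
  have d: "0 < d" "(h ^^ d) x0 = x0"
    using LeastI[of "\<lambda>k. 0 < k \<and> (h ^^ k) x0 = x0" m] m x0 by (simp_all add: d_def)
  have "(h ^^ k) x0 \<noteq> x0" if "0 < k" "k < d" for k
    using not_less_Least[of k "\<lambda>k. 0 < k \<and> (h ^^ k) x0 = x0"] that by (simp add: d_def)
  then have inj: "inj_on (\<lambda>i. (h ^^ i) x0) {..<d}"
    using inj_on_funpow_least[OF d(2)] by (simp add: atLeast0LessThan)
  define orbit where "orbit = (\<lambda>i. (h ^^ i) x0) ` {..<d}"
  have orbit_X: "orbit \<subseteq> X"
    using bij_betw_funpow[OF h] x0 by (auto simp: orbit_def dest: bij_betwE)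
  have x0_orbit: "x0 \<in> orbit" using d(1) by (auto simp: orbit_def intro!: image_eqI[of _ _ 0])
  have "h ((h ^^ i) x0) \<in> orbit" if "i < d" for i
  proof -
    from that consider "Suc i < d" | "Suc i = d" by fastforce
    then show ?thesis
    proof cases
      case 1
      then show ?thesis by (auto simp: orbit_def intro!: image_eqI[of _ _ "Suc i"])
    next
      case 2
      then have "h ((h ^^ i) x0) = x0" using d(2) by auto
      then show ?thesis using x0_orbit by simp
    qed
  qed
  then have "h ` orbit \<subseteq> orbit" by (auto simp: orbit_def)
  moreover have "inj_on h orbit" using h orbit_X by (meson bij_betw_imp_inj_on inj_on_subset)
  ultimately have h_orbit: "h ` orbit = orbit" using endo_inj_surj[of orbit h] by (simp add: orbit_def)
  have h_orbit_iff: "h x \<in> orbit \<longleftrightarrow> x \<in> orbit" if "x \<in> X" for x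
    using h_orbit that orbit_X bij_betw_imp_inj_on[OF h] by (auto simp: inj_on_def)
  have "card X \<noteq> 2" using not_prime two_is_prime_nat by metis
  with two have "2 < card X" by simp
  show ?thesis
  proof (cases "orbit = X")
    case True
    then have "card X = d" using card_image[OF inj] by (simp add: orbit_def)
    then obtain a where a: "a dvd d" "a \<noteq> 1" "a \<noteq> d"
      using not_prime two by (auto simp: prime_nat_iff)
    then have "1 < a" "a < d" using d(1) by (auto dest: dvd_imp_le intro: Nat.gr0I)
    with a show ?thesis
      using cyclic_nontrivial_invariant_equiv[OF fin h True[symmetric, unfolded orbit_def] inj d(2)] by blast
  next
    case False
    then obtain q where "q \<in> X" "q \<notin> orbit" using orbit_X by blast
    then show ?thesis
      using invariant_subset_nontrivial_equiv[OF fin \<open>2 < card X\<close> orbit_X x0_orbit] h_orbit_iff h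
      by (auto simp: bij_betw_def)
  qed
qed

section \<open>Congruences and quotients of solutions\<close>

definition class_rep :: "('a \<times> 'a) set \<Rightarrow> 'a \<Rightarrow> 'a" where
  "class_rep R x = (SOME y. y \<in> R `` {x})"

lemma class_rep_related:
  assumes "equiv X R" "x \<in> X"
  shows "(class_rep R x, x) \<in> R"
proof -
  have "x \<in> R `` {x}" using assms by (meson equiv_class_self)
  then have "(x, class_rep R x) \<in> R" unfolding class_rep_def by (metis Image_singleton_iff someI)
  then show ?thesis using assms(1) by (meson equiv_def symD)
qed

lemma class_rep_in:
  assumes "equiv X R" "x \<in> X"
  shows "class_rep R x \<in> X"
  using class_rep_related[OF assms] assms(1) by (auto simp: equiv_def refl_on_def)

lemma class_rep_eq_iff:
  assumes R: "equiv X R" and "x \<in> X" "y \<in> X"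
  shows "class_rep R x = class_rep R y \<longleftrightarrow> (x, y) \<in> R"
proof
  assume "class_rep R x = class_rep R y"
  with class_rep_related[OF R] assms show "(x, y) \<in> R"
    by (metis R equiv_def symD transD)
next
  assume "(x, y) \<in> R"
  then have "R `` {x} = R `` {y}" using R equiv_class_eq_iff by metis
  then show "class_rep R x = class_rep R y" by (simp add: class_rep_def)
qed

lemma finite_surj_bij: "finite A \<Longrightarrow> f ` A = A \<Longrightarrow> bij_betw f A A"
  by (simp add: bij_betw_def eq_card_imp_inj_on)

lemma simple_card_ge_2:
  assumes "ybe_simple X r" "finite X"
  shows "2 \<le> card X"
proof -
  obtain x y where "x \<in> X" "y \<in> X" "x \<noteq> y" using assms(1) by (auto simp: ybe_simple_def)
  then have "card {x, y} \<le> card X" by (intro card_mono assms(2)) auto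
  with \<open>x \<noteq> y\<close> show ?thesis by simp
qed

lemma ybe_braid_iff:
  "(let r12 = (\<lambda>(a, b, c). (let (p, q) = r (a, b) in (p, q, c)));
        r23 = (\<lambda>(a, b, c). (let (p, q) = r (b, c) in (a, p, q)))
    in r12 (r23 (r12 (x, y, z))) = r23 (r12 (r23 (x, y, z)))) \<longleftrightarrow>
   ybe_sigma r (ybe_sigma r x y) (ybe_sigma r (ybe_gamma r y x) z) = ybe_sigma r x (ybe_sigma r y z) \<and>
   ybe_gamma r (ybe_sigma r (ybe_gamma r y x) z) (ybe_sigma r x y)
     = ybe_sigma r (ybe_gamma r (ybe_sigma r y z) x) (ybe_gamma r z y) \<and>
   ybe_gamma r z (ybe_gamma r y x) = ybe_gamma r (ybe_gamma r z y) (ybe_gamma r (ybe_sigma r y z) x)"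
  by (simp add: Let_def split_def ybe_sigma_def ybe_gamma_def prod_eq_iff)

definition solution_congruence ::
  "'a set \<Rightarrow> ('a \<times> 'a \<Rightarrow> 'a \<times> 'a) \<Rightarrow> ('a \<times> 'a) set \<Rightarrow> bool" where
  "solution_congruence X r R \<longleftrightarrow> equiv X R \<and>
     (\<forall>(x, x') \<in> R. \<forall>(y, y') \<in> R.
        (ybe_sigma r x y, ybe_sigma r x' y') \<in> R \<and> (ybe_gamma r y x, ybe_gamma r y' x') \<in> R)"

text \<open>The quotient by a congruence is realised on a set of class representatives, so that it
  lives on the same type as the solution itself, as the definition of simplicity requires.\<close>

definition quotient_solution ::
  "('a \<times> 'a \<Rightarrow> 'a \<times> 'a) \<Rightarrow> ('a \<times> 'a) set \<Rightarrow> 'a \<times> 'a \<Rightarrow> 'a \<times> 'a" where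
  "quotient_solution r R =
     (\<lambda>(u, v). (class_rep R (ybe_sigma r u v), class_rep R (ybe_gamma r v u)))"

locale finite_solution =
  fixes X :: "'a set" and r :: "'a \<times> 'a \<Rightarrow> 'a \<times> 'a"
  assumes solution: "ybe_solution X r" and finite: "finite X"
begin

abbreviation \<sigma> where "\<sigma> \<equiv> ybe_sigma r"
abbreviation \<gamma> where "\<gamma> \<equiv> ybe_gamma r"

lemma nonempty: "X \<noteq> {}"
  using solution by (simp add: ybe_solution_def)

lemma sigma_bij: "x \<in> X \<Longrightarrow> bij_betw (\<sigma> x) X X"
  using solution by (simp add: ybe_solution_def)

lemma gamma_bij: "x \<in> X \<Longrightarrow> bij_betw (\<gamma> x) X X"
  using solution by (simp add: ybe_solution_def)

lemma sigma_in [simp]: "x \<in> X \<Longrightarrow> y \<in> X \<Longrightarrow> \<sigma> x y \<in> X"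
  using sigma_bij bij_betwE by blast

lemma gamma_in [simp]: "x \<in> X \<Longrightarrow> y \<in> X \<Longrightarrow> \<gamma> x y \<in> X"
  using gamma_bij bij_betwE by blast

lemma sigma_gamma_involutive:
  assumes "x \<in> X" "y \<in> X"
  shows "\<sigma> (\<sigma> x y) (\<gamma> y x) = x" and "\<gamma> (\<gamma> y x) (\<sigma> x y) = y"
proof -
  have "r (r (x, y)) = (x, y)" using solution assms by (simp add: ybe_solution_def)
  then show "\<sigma> (\<sigma> x y) (\<gamma> y x) = x" and "\<gamma> (\<gamma> y x) (\<sigma> x y) = y"
    by (simp_all add: ybe_sigma_def ybe_gamma_def)
qed

lemma braid_equations:
  assumes "x \<in> X" "y \<in> X" "z \<in> X"
  shows "\<sigma> (\<sigma> x y) (\<sigma> (\<gamma> y x) z) = \<sigma> x (\<sigma> y z)"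
    and "\<gamma> (\<sigma> (\<gamma> y x) z) (\<sigma> x y) = \<sigma> (\<gamma> (\<sigma> y z) x) (\<gamma> z y)"
    and "\<gamma> z (\<gamma> y x) = \<gamma> (\<gamma> z y) (\<gamma> (\<sigma> y z) x)"
  using solution assms unfolding ybe_solution_def ybe_braid_iff by blast+

definition sigma_inv :: "'a \<Rightarrow> 'a \<Rightarrow> 'a" where
  "sigma_inv x = inv_into X (\<sigma> x)"

lemma sigma_inv_bij: "x \<in> X \<Longrightarrow> bij_betw (sigma_inv x) X X"
  unfolding sigma_inv_def by (simp add: bij_betw_inv_into sigma_bij)

lemma sigma_inv_in [simp]: "x \<in> X \<Longrightarrow> y \<in> X \<Longrightarrow> sigma_inv x y \<in> X"
  using sigma_inv_bij bij_betwE by blast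

lemma sigma_inv_sigma [simp]: "x \<in> X \<Longrightarrow> y \<in> X \<Longrightarrow> sigma_inv x (\<sigma> x y) = y"
  unfolding sigma_inv_def by (meson bij_betw_def inv_into_f_f sigma_bij)

lemma sigma_sigma_inv [simp]: "x \<in> X \<Longrightarrow> y \<in> X \<Longrightarrow> \<sigma> x (sigma_inv x y) = y"
  unfolding sigma_inv_def by (metis bij_betw_def f_inv_into_f sigma_bij)

lemma gamma_eq_sigma_inv: "x \<in> X \<Longrightarrow> y \<in> X \<Longrightarrow> \<gamma> y x = sigma_inv (\<sigma> x y) x"
  by (metis gamma_in sigma_gamma_involutive(1) sigma_in sigma_inv_sigma)

lemma sigma_sigma_inv_swap:
  assumes "a \<in> X" "b \<in> X" "w \<in> X"
  shows "\<sigma> a (\<sigma> (sigma_inv a b) w) = \<sigma> b (\<sigma> (sigma_inv b a) w)"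
proof -
  define y where "y = sigma_inv a b"
  have y: "y \<in> X" "\<sigma> a y = b" using assms by (simp_all add: y_def)
  then have "\<gamma> y a = sigma_inv b a" using gamma_eq_sigma_inv[of a y] assms by simp
  then show ?thesis using braid_equations(1)[of a y w] y assms by (simp add: y_def)
qed

context
  fixes R assumes congruence: "solution_congruence X r R"
begin

lemma congruence_equiv: "equiv X R"
  using congruence by (simp add: solution_congruence_def)

lemma congruence_sigma: "(x, x') \<in> R \<Longrightarrow> (y, y') \<in> R \<Longrightarrow> (\<sigma> x y, \<sigma> x' y') \<in> R"
  using congruence unfolding solution_congruence_def by blast

lemma congruence_gamma: "(x, x') \<in> R \<Longrightarrow> (y, y') \<in> R \<Longrightarrow> (\<gamma> y x, \<gamma> y' x') \<in> R"
  using congruence unfolding solution_congruence_def by blast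

lemma congruence_class_rep_in [simp]: "x \<in> X \<Longrightarrow> class_rep R x \<in> X"
  using class_rep_in[OF congruence_equiv] .

lemma class_rep_sigma [simp]:
  assumes "a \<in> X" "b \<in> X"
  shows "class_rep R (\<sigma> (class_rep R a) (class_rep R b)) = class_rep R (\<sigma> a b)"
proof -
  have "(\<sigma> (class_rep R a) (class_rep R b), \<sigma> a b) \<in> R"
    by (intro congruence_sigma class_rep_related[OF congruence_equiv] assms)
  then show ?thesis using class_rep_eq_iff[OF congruence_equiv] assms by simp
qed

lemma class_rep_gamma [simp]:
  assumes "a \<in> X" "b \<in> X"
  shows "class_rep R (\<gamma> (class_rep R b) (class_rep R a)) = class_rep R (\<gamma> b a)"
proof -
  have "(\<gamma> (class_rep R b) (class_rep R a), \<gamma> b a) \<in> R"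
    by (intro congruence_gamma class_rep_related[OF congruence_equiv] assms)
  then show ?thesis using class_rep_eq_iff[OF congruence_equiv] assms by simp
qed

lemma quotient_solution_sigma: "ybe_sigma (quotient_solution r R) u = (\<lambda>v. class_rep R (\<sigma> u v))"
  by (simp add: ybe_sigma_def quotient_solution_def fun_eq_iff)

lemma quotient_solution_gamma: "ybe_gamma (quotient_solution r R) v = (\<lambda>u. class_rep R (\<gamma> v u))"
  by (simp add: ybe_gamma_def quotient_solution_def fun_eq_iff)

lemma quotient_solution_is_solution: "ybe_solution (class_rep R ` X) (quotient_solution r R)"
  unfolding ybe_solution_def ybe_braid_iff
proof (intro conjI ballI)
  show "class_rep R ` X \<noteq> {}" using nonempty by simp
next
  fix u v assume "u \<in> class_rep R ` X" "v \<in> class_rep R ` X"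
  then obtain a b where ab: "a \<in> X" "b \<in> X" "u = class_rep R a" "v = class_rep R b" by blast
  then show "quotient_solution r R (u, v) \<in> class_rep R ` X \<times> class_rep R ` X"
    and "quotient_solution r R (quotient_solution r R (u, v)) = (u, v)"
    by (simp_all add: quotient_solution_def sigma_gamma_involutive)
next
  fix u assume "u \<in> class_rep R ` X"
  then obtain a where a: "a \<in> X" "u = class_rep R a" by blast
  have "(\<lambda>v. class_rep R (\<sigma> u v)) ` class_rep R ` X = class_rep R ` \<sigma> a ` X"
    unfolding image_image using a by (intro image_cong) auto
  also have "\<sigma> a ` X = X" using sigma_bij[OF a(1)] by (simp add: bij_betw_def)
  finally show "bij_betw (ybe_sigma (quotient_solution r R) u) (class_rep R ` X) (class_rep R ` X)"
    unfolding quotient_solution_sigma using finite by (intro finite_surj_bij) auto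
  have "(\<lambda>v. class_rep R (\<gamma> u v)) ` class_rep R ` X = class_rep R ` \<gamma> a ` X"
    unfolding image_image using a by (intro image_cong) auto
  also have "\<gamma> a ` X = X" using gamma_bij[OF a(1)] by (simp add: bij_betw_def)
  finally show "bij_betw (ybe_gamma (quotient_solution r R) u) (class_rep R ` X) (class_rep R ` X)"
    unfolding quotient_solution_gamma using finite by (intro finite_surj_bij) auto
next
  fix u v w assume "u \<in> class_rep R ` X" "v \<in> class_rep R ` X" "w \<in> class_rep R ` X"
  then obtain a b c where abc: "a \<in> X" "b \<in> X" "c \<in> X"
    "u = class_rep R a" "v = class_rep R b" "w = class_rep R c" by blast
  then show
    "ybe_sigma (quotient_solution r R) (ybe_sigma (quotient_solution r R) u v)
       (ybe_sigma (quotient_solution r R) (ybe_gamma (quotient_solution r R) v u) w) =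
     ybe_sigma (quotient_solution r R) u (ybe_sigma (quotient_solution r R) v w)"
    and
    "ybe_gamma (quotient_solution r R) (ybe_sigma (quotient_solution r R) (ybe_gamma (quotient_solution r R) v u) w)
       (ybe_sigma (quotient_solution r R) u v) =
     ybe_sigma (quotient_solution r R) (ybe_gamma (quotient_solution r R) (ybe_sigma (quotient_solution r R) v w) u)
       (ybe_gamma (quotient_solution r R) w v)"
    and
    "ybe_gamma (quotient_solution r R) w (ybe_gamma (quotient_solution r R) v u) =
     ybe_gamma (quotient_solution r R) (ybe_gamma (quotient_solution r R) w v)
       (ybe_gamma (quotient_solution r R) (ybe_sigma (quotient_solution r R) v w) u)"
    using braid_equations[OF abc(1-3)] by (simp_all add: quotient_solution_sigma quotient_solution_gamma)
qed

lemma quotient_solution_hom: "ybe_hom X r (class_rep R ` X) (quotient_solution r R) (class_rep R)"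
  unfolding ybe_hom_def by (simp add: quotient_solution_sigma)

lemma simple_congruence_trivial:
  assumes "ybe_simple X r"
  shows "R = Id_on X \<or> R = X \<times> X"
proof -
  have R: "R \<subseteq> X \<times> X" "Id_on X \<subseteq> R"
    using congruence_equiv by (auto simp: equiv_def refl_on_def)
  have "inj_on (class_rep R) X \<or> (\<exists>y. class_rep R ` X = {y})"
    using assms quotient_solution_is_solution quotient_solution_hom unfolding ybe_simple_def by blast
  then show ?thesis
  proof
    assume "inj_on (class_rep R) X"
    then have "R \<subseteq> Id_on X"
      using R(1) class_rep_eq_iff[OF congruence_equiv] by (auto dest: inj_onD)
    with R(2) show ?thesis by blast
  next
    assume "\<exists>y. class_rep R ` X = {y}"
    then obtain y where "class_rep R ` X = {y}" by blast
    then have "class_rep R x = class_rep R x'" if "x \<in> X" "x' \<in> X" for x x'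
      using that by (metis imageI singletonD)
    then have "X \<times> X \<subseteq> R" using class_rep_eq_iff[OF congruence_equiv] by auto
    with R(1) show ?thesis by blast
  qed
qed

end

section \<open>The retraction relation and solutions with constant \<sigma>\<close>

definition retraction_rel :: "('a \<times> 'a) set" where
  "retraction_rel = {(x, y) \<in> X \<times> X. \<forall>z\<in>X. \<sigma> x z = \<sigma> y z}"

lemma retraction_rel_equiv: "equiv X retraction_rel"
  by (auto simp: equiv_def refl_on_def sym_def trans_def retraction_rel_def)

lemma irretractable_if_retraction_rel_Id:
  assumes "retraction_rel = Id_on X"
  shows "irretractable X r"
  unfolding irretractable_def
proof (intro ballI impI)
  fix x y assume "x \<in> X" "y \<in> X" "x \<noteq> y"
  with assms have "(x, y) \<notin> retraction_rel" by (simp add: Id_on_iff)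
  with \<open>x \<in> X\<close> \<open>y \<in> X\<close> show "\<exists>z\<in>X. \<sigma> x z \<noteq> \<sigma> y z"
    by (simp add: retraction_rel_def)
qed

lemma retraction_rel_sigma_inv_eq:
  assumes "(x, y) \<in> retraction_rel" "z \<in> X"
  shows "sigma_inv x z = sigma_inv y z"
proof -
  have x: "x \<in> X" and y: "y \<in> X" and eq: "\<forall>w\<in>X. \<sigma> x w = \<sigma> y w"
    using assms(1) by (auto simp: retraction_rel_def)
  have "\<sigma> x (sigma_inv x z) = \<sigma> y (sigma_inv x z)" using eq sigma_inv_in[OF x assms(2)] by blast
  then have "\<sigma> y (sigma_inv x z) = z" using x assms(2) by simp
  then show ?thesis using sigma_inv_sigma[OF y, of "sigma_inv x z"] x assms(2) by simp
qed

lemma retraction_rel_sigma_inv: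
  assumes "z \<in> X"
  shows "map_prod (sigma_inv z) (sigma_inv z) ` retraction_rel \<subseteq> retraction_rel"
proof clarify
  fix x y assume xy: "(x, y) \<in> retraction_rel"
  then have x: "x \<in> X" and y: "y \<in> X" by (auto simp: retraction_rel_def)
  have "\<sigma> (sigma_inv z x) w = \<sigma> (sigma_inv z y) w" if w: "w \<in> X" for w
  proof -
    have "\<sigma> z (\<sigma> (sigma_inv z x) w) = \<sigma> x (\<sigma> (sigma_inv x z) w)"
      using sigma_sigma_inv_swap assms x w by blast
    also have "\<dots> = \<sigma> y (\<sigma> (sigma_inv y z) w)"
      using xy retraction_rel_sigma_inv_eq[OF xy assms] x y assms w by (simp add: retraction_rel_def)
    also have "\<dots> = \<sigma> z (\<sigma> (sigma_inv z y) w)"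
      using sigma_sigma_inv_swap assms y w by blast
    finally show ?thesis
      using assms x y w by (metis sigma_in sigma_inv_in sigma_inv_sigma)
  qed
  then show "(sigma_inv z x, sigma_inv z y) \<in> retraction_rel"
    using assms x y by (simp add: retraction_rel_def)
qed

lemma retraction_rel_sigma:
  assumes "z \<in> X"
  shows "map_prod (\<sigma> z) (\<sigma> z) ` retraction_rel \<subseteq> retraction_rel"
proof (rule map_prod_inverse_invariant[OF sigma_inv_bij[OF assms] finite])
  show "retraction_rel \<subseteq> X \<times> X" by (auto simp: retraction_rel_def)
  show "\<sigma> z x \<in> X \<and> sigma_inv z (\<sigma> z x) = x" if "x \<in> X" for x
    using assms that by simp
qed (rule retraction_rel_sigma_inv[OF assms])

lemma retraction_congruence: "solution_congruence X r retraction_rel"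
  unfolding solution_congruence_def
proof (intro conjI retraction_rel_equiv ballI, clarify)
  fix x x' y y' assume xx': "(x, x') \<in> retraction_rel" and yy': "(y, y') \<in> retraction_rel"
  then have in_X: "x \<in> X" "x' \<in> X" "y \<in> X" "y' \<in> X" by (auto simp: retraction_rel_def)
  have "\<sigma> x y = \<sigma> x' y" using xx' in_X by (auto simp: retraction_rel_def)
  moreover have "(\<sigma> x' y, \<sigma> x' y') \<in> retraction_rel"
    using retraction_rel_sigma[of x'] yy' in_X by (blast intro: map_prod_imageI)
  ultimately have \<sigma>_rel: "(\<sigma> x y, \<sigma> x' y') \<in> retraction_rel" by simp
  have "\<gamma> y x = sigma_inv (\<sigma> x' y') x"
    using gamma_eq_sigma_inv retraction_rel_sigma_inv_eq[OF \<sigma>_rel] in_X by simp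
  moreover have "(sigma_inv (\<sigma> x' y') x, sigma_inv (\<sigma> x' y') x') \<in> retraction_rel"
    using retraction_rel_sigma_inv[OF sigma_in[OF in_X(2,4)]] xx' by (blast intro: map_prod_imageI)
  ultimately have "(\<gamma> y x, \<gamma> y' x') \<in> retraction_rel"
    using gamma_eq_sigma_inv in_X by simp
  with \<sigma>_rel show "(\<sigma> x y, \<sigma> x' y') \<in> retraction_rel \<and> (\<gamma> y x, \<gamma> y' x') \<in> retraction_rel" ..
qed

lemma constant_sigma_congruence:
  assumes const: "\<And>x y. x \<in> X \<Longrightarrow> y \<in> X \<Longrightarrow> \<sigma> x y = h y"
    and R: "equiv X R" "map_prod h h ` R \<subseteq> R"
  shows "solution_congruence X r R"
proof -
  obtain x0 where x0: "x0 \<in> X" using nonempty by blast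
  have h: "bij_betw h X X"
    using sigma_bij[OF x0] bij_betw_cong[of X "\<sigma> x0" h X] const[OF x0] by blast
  have h_gamma: "h (\<gamma> y x) = x" if "x \<in> X" "y \<in> X" for x y
    using const[of "\<sigma> x y" "\<gamma> y x"] sigma_gamma_involutive(1)[OF that] that by simp
  have gamma_const: "\<gamma> y x = \<gamma> x0 x" if "x \<in> X" "y \<in> X" for x y
  proof (rule inj_onD[OF bij_betw_imp_inj_on[OF h]])
    show "h (\<gamma> y x) = h (\<gamma> x0 x)" using h_gamma that x0 by simp
  qed (use that x0 in simp_all)
  have R_X: "R \<subseteq> X \<times> X" using R(1) by (simp add: equiv_def refl_on_def)
  have gamma_x0: "map_prod (\<gamma> x0) (\<gamma> x0) ` R \<subseteq> R"
    using map_prod_inverse_invariant[OF h finite R_X _ R(2)] h_gamma x0 by simp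
  have gamma_rel: "(\<gamma> y x, \<gamma> y' x') \<in> R" if "(x, x') \<in> R" "(y, y') \<in> R" for x x' y y'
  proof -
    have "\<gamma> y x = \<gamma> x0 x" "\<gamma> y' x' = \<gamma> x0 x'" using that R_X gamma_const by auto
    moreover have "(\<gamma> x0 x, \<gamma> x0 x') \<in> R" using gamma_x0 that(1) by blast
    ultimately show ?thesis by simp
  qed
  have sigma_rel: "(\<sigma> x y, \<sigma> x' y') \<in> R" if "(x, x') \<in> R" "(y, y') \<in> R" for x x' y y'
  proof -
    have "\<sigma> x y = h y" "\<sigma> x' y' = h y'" using that R_X const by auto
    moreover have "(h y, h y') \<in> R" using R(2) that(2) by blast
    ultimately show ?thesis by simp
  qed
  show ?thesis
    unfolding solution_congruence_def using R(1) sigma_rel gamma_rel by blast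
qed

end

theorem mainTheorem2:
  fixes X :: "'a set" and r :: "'a \<times> 'a \<Rightarrow> 'a \<times> 'a"
  assumes "ybe_solution X r"
    and "finite X"
    and "ybe_simple X r"
    and "\<not> prime (card X :: nat)"
  shows "irretractable X r"
proof -
  interpret finite_solution X r using assms(1,2) by unfold_locales
  from simple_congruence_trivial[OF retraction_congruence assms(3)]
  show ?thesis
  proof
    assume "retraction_rel = Id_on X"
    then show ?thesis by (rule irretractable_if_retraction_rel_Id)
  next
    assume total: "retraction_rel = X \<times> X"
    obtain x0 where x0: "x0 \<in> X" using nonempty by blast
    with total have const: "\<And>x y. x \<in> X \<Longrightarrow> y \<in> X \<Longrightarrow> \<sigma> x y = \<sigma> x0 y"
      by (auto simp: retraction_rel_def)
    obtain R where "equiv X R" "map_prod (\<sigma> x0) (\<sigma> x0) ` R \<subseteq> R" "R \<noteq> Id_on X" "R \<noteq> X \<times> X"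
      using permutation_nontrivial_invariant_equiv[OF assms(2) sigma_bij[OF x0]
          simple_card_ge_2[OF assms(3,2)] assms(4)] by blast
    with simple_congruence_trivial[OF constant_sigma_congruence[OF const] assms(3)] show ?thesis
      by blast
  qed
qed

end
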